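(* Let $U\subset\mathbb{C}$ be a domain conformally isomorphic to $\mathbb{D}$, let $U'=U_1\cup\dots\cup U_N$ be relatively compact in $U$ with the $U_i$ pairwise disjoint domains each conformally isomorphic to $\mathbb{D}$, and let $f:U'\to U$ be a proper holomorphic map of degree $d>1$ such that $K_f=J_f$ is a Cantor set containing all critical points of $f$. Let $w\in U\setminus U'$, let $w_0,\dots,w_{d-1}$ be the $d$ distinct preimages of $w$ under $f$, and let $\phi:\mathbb{D}\to U\setminus J_f$ be a universal covering map with $\phi(0)=w$. Then there exist $d$ univalent holomorphic maps $g_0,\dots,g_{d-1}:\mathbb{D}\to\mathbb{D}$ with $f\circ\phi\circ g_i=\phi$ and $\phi(g_i(0))=w_i$ for each $i$. These satisfy $\phi(g_j(z))\neq\phi(g_{j'}(z))$ for all $z\in\mathbb{D}$ and $j\neq j'$, i.e. for every $z\in\mathbb{D}$ the points $\phi(g_j(z))$, $j=0,\dots,d-1$, are the $d$ distinct preimages of $\phi(z)$ under $f$. In particular $$f^{-1}(U\setminus J_f)=U'\setminus J_f=\bigcup_{i=0}^{d-1}\phi(g_i(\mathbb{D})).$$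
   Context: $K_f=\{z\in U' : f^n(z)\in U' \ \forall n\in\mathbb{N}\}$ is the filled-in Julia set and $J_f=\partial K_f$ the Julia set. The degree of $f$ is the sum of the degrees of the restrictions $f:U_i\to U$. *)

theory Defs
  imports "HOL-Complex_Analysis.Complex_Analysis"
begin

definition conformal_disc :: "complex set \<Rightarrow> bool" where
  "conformal_disc U \<longleftrightarrow> open U \<and> connected U \<and>
     (\<exists>h. h holomorphic_on U \<and> bij_betw h U (ball 0 1))"

definition holo_degree :: "(complex \<Rightarrow> complex) \<Rightarrow> complex set \<Rightarrow> complex set \<Rightarrow> nat \<Rightarrow> bool" where
  "holo_degree g V U d \<longleftrightarrow>
     (\<forall>y\<in>U. (\<Sum>z\<in>{z\<in>V. g z = y}. nat (zorder (\<lambda>x. g x - y) z)) = d)"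

definition filled_julia :: "(complex \<Rightarrow> complex) \<Rightarrow> complex set \<Rightarrow> complex set" where
  "filled_julia f U' = {z \<in> U'. \<forall>n::nat. (f ^^ n) z \<in> U'}"

definition julia :: "(complex \<Rightarrow> complex) \<Rightarrow> complex set \<Rightarrow> complex set" where
  "julia f U' = frontier (filled_julia f U')"

definition cantor_set :: "complex set \<Rightarrow> bool" where
  "cantor_set S \<longleftrightarrow> S \<noteq> {} \<and> compact S \<and> (\<forall>x\<in>S. x islimpt S) \<and>
     (\<forall>x\<in>S. connected_component_set S x = {x})"

end

theory Submission
  imports Defs
begin

(* Off the Julia set J the map f has no critical points, and J is completely invariant, so
   f : U' - J \<rightarrow> U - J is a proper local homeomorphism, hence a covering. Lifting the universal
   covering \<phi> through it, starting at each preimage w_i of w = \<phi> 0, and lifting the result back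
   through \<phi> gives the branches g_i; uniqueness of lifts along paths shows that at every point they
   hit distinct preimages, and all of them.

   Injectivity of g_i: if g_i a = g_i b, take a path \<gamma> from a to b. The loop \<phi> \<circ> g_i \<circ> \<gamma> lies in
   one component U_k of U' and is null-homotopic in U - J, being the image of a loop in the disc.
   Retracting the plane onto a conformal subdisc of U_k whose boundary curve misses J makes it
   null-homotopic in U' - J; applying f, the loop \<phi> \<circ> \<gamma> is null-homotopic in U - J, so its lift \<gamma>
   is closed and a = b. *)

section \<open>Proper nonsingular holomorphic maps are coverings\<close>

lemma finite_imp_disjoint_balls:
  fixes F :: "'a::metric_space set"
  assumes "finite F"
  obtains e where "e > 0" "\<And>a b. a \<in> F \<Longrightarrow> b \<in> F \<Longrightarrow> a \<noteq> b \<Longrightarrow> ball a e \<inter> ball b e = {}"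
proof -
  define P where "P = {(a, b). a \<in> F \<and> b \<in> F \<and> a \<noteq> b}"
  have "finite P"
    by (rule finite_subset[of P "F \<times> F"]) (auto simp: P_def assms)
  define e where "e = Min (insert 1 ((\<lambda>(a, b). dist a b) ` P)) / 2"
  have "e > 0"
    unfolding e_def using \<open>finite P\<close> by (subst zero_less_divide_iff, subst Min_gr_iff) (auto simp: P_def)
  moreover have "ball a e \<inter> ball b e = {}" if "a \<in> F" "b \<in> F" "a \<noteq> b" for a b
  proof -
    have "2 * e \<le> dist a b"
      unfolding e_def using \<open>finite P\<close> that by (auto intro: Min_le simp: P_def)
    then have False if "dist a x < e" "dist b x < e" for x
      using dist_triangle3[of a b x] that by (simp add: dist_commute)
    then show ?thesis by auto
  qed
  ultimately show ?thesis using that by blast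
qed

lemma closed_map_fibre_neighbourhood:
  assumes "closed_map (top_of_set Y) (top_of_set X) f" "y \<in> X"
    and "open G" "{x \<in> Y. f x = y} \<subseteq> G"
  obtains T where "open T" "y \<in> T" "{x \<in> Y. f x \<in> T} \<subseteq> G"
proof -
  have "closedin (top_of_set Y) (Y - G)"
    using \<open>open G\<close> by (simp add: Diff_eq closedin_closed_Int closed_Compl)
  then obtain C where C: "closed C" "f ` (Y - G) = X \<inter> C"
    using assms(1) by (metis closed_map_def closedin_closed)
  show ?thesis
  proof (rule that[of "- C"])
    show "y \<in> - C"
    proof
      assume "y \<in> C"
      then have "y \<in> f ` (Y - G)" using C(2) assms(2) by blast
      then show False using assms(4) by blast
    qed
    show "{x \<in> Y. f x \<in> - C} \<subseteq> G"
    proof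
      fix x assume "x \<in> {x \<in> Y. f x \<in> - C}"
      then show "x \<in> G" using C(2) by blast
    qed
  qed (use C(1) in auto)
qed

lemma injective_holomorphic_homeomorphism:
  assumes "f holomorphic_on S" "open S" "inj_on f S"
  obtains g where "homeomorphism S (f ` S) f g"
proof (rule homeomorphism_injective_open_map)
  show "continuous_on S f" using assms(1) by (rule holomorphic_on_imp_continuous_on)
  fix V assume "openin (top_of_set S) V"
  then have "open V" "V \<subseteq> S" using assms(2) openin_open_trans openin_imp_subset by blast+
  then have "open (f ` V)"
    using assms by (meson holomorphic_on_subset inj_on_subset open_mapping_thm3)
  then show "openin (top_of_set (f ` S)) (f ` V)"
    using \<open>V \<subseteq> S\<close> by (auto intro: open_subset)
qed (use assms in auto)

lemma injective_holomorphic_sheet: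
  assumes "f holomorphic_on V" "open V" "inj_on f V" "open T" "T \<subseteq> f ` V"
  shows "open (V \<inter> f -` T)" "\<exists>q. homeomorphism (V \<inter> f -` T) T f q"
proof -
  show "open (V \<inter> f -` T)"
    using assms(1,2,4) holomorphic_on_imp_continuous_on continuous_open_preimage by blast
  moreover have "f ` (V \<inter> f -` T) = T"
    using assms(5) by blast
  ultimately show "\<exists>q. homeomorphism (V \<inter> f -` T) T f q"
    using injective_holomorphic_homeomorphism[of f "V \<inter> f -` T"] assms(1,3)
    by (metis inf_le1 holomorphic_on_subset inj_on_subset)
qed

lemma nonsingular_holomorphic_fibre_sheets:
  assumes "open Y" "f holomorphic_on Y" "\<And>z. z \<in> Y \<Longrightarrow> deriv f z \<noteq> 0"
    and "compact F" "F \<subseteq> Y" "f constant_on F"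
  obtains V where "finite F"
    "\<And>x. x \<in> F \<Longrightarrow> x \<in> V x \<and> open (V x) \<and> V x \<subseteq> Y \<and> inj_on f (V x)"
    "\<And>a b. a \<in> F \<Longrightarrow> b \<in> F \<Longrightarrow> a \<noteq> b \<Longrightarrow> V a \<inter> V b = {}"
proof -
  have "\<exists>r>0. ball x r \<subseteq> Y \<and> inj_on f (ball x r)" if "x \<in> Y" for x
    using has_complex_derivative_locally_injective[OF assms(2) that assms(1) assms(3)[OF that]] by blast
  then obtain R where R: "\<And>x. x \<in> Y \<Longrightarrow> R x > 0 \<and> ball x (R x) \<subseteq> Y \<and> inj_on f (ball x (R x))"
    by metis
  have "\<not> x islimpt F" if "x \<in> F" for x
  proof
    assume "x islimpt F"
    moreover have Rx: "R x > 0" "inj_on f (ball x (R x))" and "x \<in> ball x (R x)"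
      using R that assms(5) by auto
    ultimately obtain x' where x': "x' \<in> F" "x' \<noteq> x" "dist x' x < R x"
      using islimpt_approachable by blast
    then have "x' \<in> ball x (R x)" by (simp add: dist_commute)
    moreover have "f x' = f x" using x' that assms(6) by (auto simp: constant_on_def)
    ultimately show False
      using Rx \<open>x \<in> ball x (R x)\<close> x'(2) by (meson inj_onD)
  qed
  then have "finite F"
    using finite_not_islimpt_in_compact[OF assms(4), of F] by simp
  then obtain e where e: "e > 0" "\<And>a b. a \<in> F \<Longrightarrow> b \<in> F \<Longrightarrow> a \<noteq> b \<Longrightarrow> ball a e \<inter> ball b e = {}"
    using finite_imp_disjoint_balls by blast
  show ?thesis
  proof (rule that[of "\<lambda>x. ball x (min (R x) e)"])
    show "finite F" by fact
    show "x \<in> ball x (min (R x) e) \<and> open (ball x (min (R x) e)) \<and> ball x (min (R x) e) \<subseteq> Y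
            \<and> inj_on f (ball x (min (R x) e))" if "x \<in> F" for x
    proof -
      have "R x > 0" "ball x (R x) \<subseteq> Y" "inj_on f (ball x (R x))"
        using R that assms(5) by auto
      moreover have "ball x (min (R x) e) \<subseteq> ball x (R x)" by auto
      ultimately show ?thesis using e(1) by (auto intro: inj_on_subset)
    qed
    show "ball a (min (R a) e) \<inter> ball b (min (R b) e) = {}"
      if "a \<in> F" "b \<in> F" "a \<noteq> b" for a b
      using e(2)[OF that] by auto
  qed
qed

lemma covering_space_proper_nonsingular_holomorphic:
  assumes openY: "open Y" and openX: "open X" and holf: "f holomorphic_on Y"
    and dnz: "\<And>z. z \<in> Y \<Longrightarrow> deriv f z \<noteq> 0" and surj: "f ` Y = X"
    and proper: "proper_map (top_of_set Y) (top_of_set X) f"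
  shows "covering_space Y f X"
proof (rule covering_spaceI)
  show "continuous_on Y f"
    using holf holomorphic_on_imp_continuous_on by blast
  show "f ` Y = X" by (rule surj)
  fix y assume y: "y \<in> X"
  define F where "F = {x \<in> Y. f x = y}"
  have "compactin (top_of_set Y) F"
    using proper y by (simp add: proper_map_def F_def)
  then have "compact F" "F \<subseteq> Y"
    by (simp_all add: compactin_subtopology)
  moreover have "f constant_on F"
    by (auto simp: constant_on_def F_def)
  ultimately obtain V where finF: "finite F"
    and V: "\<And>x. x \<in> F \<Longrightarrow> x \<in> V x \<and> open (V x) \<and> V x \<subseteq> Y \<and> inj_on f (V x)"
    and disjV: "\<And>a b. a \<in> F \<Longrightarrow> b \<in> F \<Longrightarrow> a \<noteq> b \<Longrightarrow> V a \<inter> V b = {}"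
    using nonsingular_holomorphic_fibre_sheets[OF openY holf dnz] by blast
  have "open (\<Union>x\<in>F. V x)"
    using V by (intro open_UN) blast
  moreover have "{x \<in> Y. f x = y} \<subseteq> (\<Union>x\<in>F. V x)"
    using V by (auto simp: F_def)
  ultimately obtain T0 where "open T0" "y \<in> T0" and T0: "{x \<in> Y. f x \<in> T0} \<subseteq> (\<Union>x\<in>F. V x)"
    by (rule closed_map_fibre_neighbourhood[OF proper_imp_closed_map[OF proper] y])
  define T where "T = X \<inter> T0 \<inter> (\<Inter>x\<in>F. f ` V x)"
  have "open (f ` V x)" if "x \<in> F" for x
    using V[OF that] holf by (meson holomorphic_on_subset open_mapping_thm3)
  then have "open T"
    unfolding T_def using openX \<open>open T0\<close> finF by (intro open_Int open_INT) auto
  have "y \<in> f ` V x" if "x \<in> F" for x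
    using V[OF that] that by (auto simp: F_def)
  then have "y \<in> T"
    using y \<open>y \<in> T0\<close> by (simp add: T_def)
  have sheet: "open (V x \<inter> f -` T)" "\<exists>q. homeomorphism (V x \<inter> f -` T) T f q" if "x \<in> F" for x
  proof -
    have "f holomorphic_on V x"
      using V[OF that] holf by (blast intro: holomorphic_on_subset)
    moreover have "T \<subseteq> f ` V x"
      using that unfolding T_def by blast
    ultimately show "open (V x \<inter> f -` T)" "\<exists>q. homeomorphism (V x \<inter> f -` T) T f q"
      using injective_holomorphic_sheet[of f "V x" T] V[OF that] \<open>open T\<close> by blast+
  qed
  show "\<exists>T. y \<in> T \<and> openin (top_of_set X) T \<and>
             (\<exists>\<V>. \<Union>\<V> = Y \<inter> f -` T \<and> (\<forall>u \<in> \<V>. openin (top_of_set Y) u) \<and>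
                  pairwise disjnt \<V> \<and> (\<forall>u \<in> \<V>. \<exists>q. homeomorphism u T f q))"
  proof (intro exI[of _ T] exI[of _ "(\<lambda>x. V x \<inter> f -` T) ` F"] conjI ballI)
    show "y \<in> T" by fact
    show "openin (top_of_set X) T"
      using \<open>open T\<close> by (auto simp: T_def intro: open_subset)
    show "\<Union>((\<lambda>x. V x \<inter> f -` T) ` F) = Y \<inter> f -` T"
    proof
      show "\<Union>((\<lambda>x. V x \<inter> f -` T) ` F) \<subseteq> Y \<inter> f -` T"
        using V by blast
      show "Y \<inter> f -` T \<subseteq> \<Union>((\<lambda>x. V x \<inter> f -` T) ` F)"
      proof
        fix z assume z: "z \<in> Y \<inter> f -` T"
        then have "z \<in> (\<Union>x\<in>F. V x)"
          using T0 by (auto simp: T_def)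
        then show "z \<in> \<Union>((\<lambda>x. V x \<inter> f -` T) ` F)"
          using z by blast
      qed
    qed
    show "pairwise disjnt ((\<lambda>x. V x \<inter> f -` T) ` F)"
      unfolding pairwise_def disjnt_def using disjV by blast
  next
    fix u assume "u \<in> (\<lambda>x. V x \<inter> f -` T) ` F"
    then obtain x where x: "x \<in> F" and u: "u = V x \<inter> f -` T" by blast
    have "u \<subseteq> Y"
      using V[OF x] u by blast
    then show "openin (top_of_set Y) u"
      using sheet(1)[OF x] u by (simp add: open_subset)
    show "\<exists>q. homeomorphism u T f q"
      using sheet(2)[OF x] u by simp
  qed
qed

section \<open>The complement of the Julia set\<close>

lemma filled_julia_image_iff:
  assumes "z \<in> U'"
  shows "f z \<in> filled_julia f U' \<longleftrightarrow> z \<in> filled_julia f U'"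
proof -
  have orbit: "x \<in> filled_julia f U' \<longleftrightarrow> (\<forall>n. (f ^^ n) x \<in> U')" for x
    by (auto simp: filled_julia_def) (metis funpow_0)
  have "(\<forall>n. (f ^^ n) (f z) \<in> U') \<longleftrightarrow> (\<forall>n. (f ^^ Suc n) z \<in> U')"
    by (simp add: funpow_Suc_right del: funpow.simps)
  also have "\<dots> \<longleftrightarrow> (\<forall>n. (f ^^ n) z \<in> U')"
    using assms by (metis funpow_0 not0_implies_Suc)
  finally show ?thesis
    by (simp only: orbit)
qed

lemma filled_julia_complement_preimage:
  assumes "f ` U' \<subseteq> U"
  shows "{z \<in> U'. f z \<in> U - filled_julia f U'} = U' - filled_julia f U'"
  using assms filled_julia_image_iff[of _ U' f] by auto

lemma filled_julia_complement_fibre: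
  assumes "x \<notin> filled_julia f U'"
  shows "{y \<in> U'. f y = x} = {y \<in> U' - filled_julia f U'. f y = x}"
  using assms filled_julia_image_iff[of _ U' f] by auto

lemma interior_eq_empty_if_frontier_eq: "frontier S = S \<Longrightarrow> interior S = {}"
  using interior_subset[of S] by (auto simp: frontier_def)

lemma holomorphic_clopen_image_eq:
  assumes "f holomorphic_on V" "open V" "connected V" "V \<noteq> {}" "\<not> f constant_on V"
    and "f ` V \<subseteq> U" "connected U" "closedin (top_of_set U) (f ` V)"
  shows "f ` V = U"
proof -
  have "open (f ` V)"
    using open_mapping_thm[OF assms(1,2,3,2) order_refl assms(5)] .
  then have "openin (top_of_set U) (f ` V)"
    using assms(6) by (simp add: open_subset)
  then show ?thesis
    using assms(4,7,8) connected_clopen by blast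
qed

lemma covering_space_complement_filled_julia:
  fixes f :: "complex \<Rightarrow> complex"
  assumes "open U" "connected U" "open U'"
    and holf: "f holomorphic_on U'" and proper: "proper_map (top_of_set U') (top_of_set U) f"
    and frontierK: "frontier (filled_julia f U') = filled_julia f U'"
    and compactK: "compact (filled_julia f U')" and "filled_julia f U' \<noteq> {}"
    and crit: "\<And>z. z \<in> U' \<Longrightarrow> deriv f z = 0 \<Longrightarrow> z \<in> filled_julia f U'"
  shows "covering_space (U' - filled_julia f U') f (U - filled_julia f U')"
proof -
  define K where "K = filled_julia f U'"
  have fU': "f ` U' \<subseteq> U"
    using proper_map_imp_subset_topspace[OF proper] by auto
  have K_iff: "f z \<in> K \<longleftrightarrow> z \<in> K" if "z \<in> U'" for z
    using filled_julia_image_iff[OF that] by (simp add: K_def)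
  obtain x0 where x0: "x0 \<in> K"
    using \<open>filled_julia f U' \<noteq> {}\<close> by (auto simp: K_def)
  then have "x0 \<in> U'" by (auto simp: K_def filled_julia_def)
  \<comment> \<open>A component of U' meeting K is not mapped to a point, since K has empty interior; being
    open and closed, its image is all of U.\<close>
  define C where "C = connected_component_set U' x0"
  have C: "open C" "connected C" "x0 \<in> C" "C \<subseteq> U'"
    using \<open>open U'\<close> \<open>x0 \<in> U'\<close> by (auto simp: C_def open_connected_component connected_component_subset)
  have "\<not> f constant_on C"
  proof
    assume "f constant_on C"
    then obtain c where c: "\<And>z. z \<in> C \<Longrightarrow> f z = c" by (auto simp: constant_on_def)
    have "deriv f z = 0" if "z \<in> C" for z
      by (rule DERIV_imp_deriv, rule has_field_derivative_transform_within_open[of "\<lambda>_. c"])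
         (use C that c in auto)
    then have "C \<subseteq> K" using crit C(4) by (auto simp: K_def)
    then have "C \<subseteq> interior K" using C(1) by (simp add: interior_maximal)
    then show False
      using interior_eq_empty_if_frontier_eq[OF frontierK] C(3) by (simp add: K_def)
  qed
  moreover have "closedin (top_of_set U) (f ` C)"
    using proper_imp_closed_map[OF proper] closedin_connected_component[of U' x0]
    unfolding closed_map_def C_def by blast
  ultimately have "f ` C = U"
    using holomorphic_clopen_image_eq[OF holomorphic_on_subset[OF holf C(4)] C(1,2)] C(3,4) fU' \<open>connected U\<close>
    by blast
  then have surj: "f ` (U' - K) = U - K"
    using C(4) fU' K_iff by (auto simp: image_iff)
  have "{x \<in> U'. f x \<in> U - K} = U' - K"
    using filled_julia_complement_preimage[OF fU'] by (simp add: K_def)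
  then have "proper_map (top_of_set (U' - K)) (top_of_set (U - K)) f"
    using proper_map_restriction[OF proper, of "U - K"] by (simp add: subtopology_subtopology Int_absorb1)
  moreover have "open (U' - K)" "open (U - K)"
    using compactK \<open>open U\<close> \<open>open U'\<close> by (auto simp: K_def compact_imp_closed intro: open_Diff)
  moreover have "f holomorphic_on U' - K"
    using holf by (rule holomorphic_on_subset) auto
  moreover have "deriv f z \<noteq> 0" if "z \<in> U' - K" for z
    using crit that by (auto simp: K_def)
  ultimately show ?thesis
    using covering_space_proper_nonsingular_holomorphic[OF _ _ _ _ surj] unfolding K_def by blast
qed

section \<open>Retractions onto conformal subdiscs\<close>

lemma compact_subset_unit_ball_shrink:
  fixes Q :: "'a::real_normed_vector set"
  assumes "compact Q" "Q \<subseteq> ball 0 1"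
  obtains r where "0 < r" "r < 1" "Q \<subseteq> ball 0 r"
proof (cases "Q = {}")
  case True
  then show ?thesis using that[of "1/2"] by auto
next
  case False
  obtain x where x: "x \<in> Q" "\<And>y. y \<in> Q \<Longrightarrow> norm y \<le> norm x"
    using continuous_attains_sup[OF assms(1) False continuous_on_norm_id] by auto
  have "norm x < 1" using x assms(2) by auto
  show ?thesis
  proof (rule that[of "max (1/2) ((norm x + 1)/2)"])
    show "Q \<subseteq> ball 0 (max (1/2) ((norm x + 1)/2))"
      using x \<open>norm x < 1\<close> by (force simp: dist_norm)
  qed (use \<open>norm x < 1\<close> in \<open>auto intro: add_nonneg_pos\<close>)
qed

lemma conformal_disc_homeomorphism:
  assumes "conformal_disc W"
  obtains \<psi> \<psi>i where "open W" "\<psi> holomorphic_on W" "homeomorphism W (ball 0 1) \<psi> \<psi>i"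
proof -
  obtain \<psi> where hol: "\<psi> holomorphic_on W" and bij: "bij_betw \<psi> W (ball 0 1)" and "open W"
    using assms by (auto simp: conformal_disc_def)
  then have "inj_on \<psi> W" "\<psi> ` W = ball 0 1"
    by (auto simp: bij_betw_def)
  with injective_holomorphic_homeomorphism[OF hol \<open>open W\<close>] show ?thesis
    using that hol \<open>open W\<close> by metis
qed

lemma injective_holomorphic_exp_factor:
  assumes "open W" "simply_connected W" "\<psi> holomorphic_on W" "inj_on \<psi> W" "z0 \<in> W"
  obtains L where "continuous_on W L" "\<And>z. z \<in> W \<Longrightarrow> \<psi> z - \<psi> z0 = (z - z0) * exp (L z)"
proof -
  define q where "q z = (if z = z0 then deriv \<psi> z0 else (\<psi> z - \<psi> z0) / (z - z0))" for z
  have "q holomorphic_on W"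
    unfolding q_def by (rule pole_lemma_open[OF assms(3,1)])
  moreover have "q z \<noteq> 0" if "z \<in> W" for z
  proof (cases "z = z0")
    case True
    then show ?thesis
      using holomorphic_injective_imp_regular[OF assms(3,1,4,5)] by (simp add: q_def)
  next
    case False
    then have "\<psi> z \<noteq> \<psi> z0" using assms(4,5) that by (meson inj_onD)
    then show ?thesis using False by (simp add: q_def)
  qed
  ultimately obtain L where "continuous_on W L" "\<And>z. z \<in> W \<Longrightarrow> q z = exp (L z)"
    using continuous_logarithm_on_simply_connected[OF holomorphic_on_imp_continuous_on assms(2)
        open_imp_locally_path_connected[OF assms(1)]] by metis
  moreover have "\<psi> z - \<psi> z0 = (z - z0) * q z" for z
    by (simp add: q_def)
  ultimately show ?thesis using that by auto
qed

lemma conformal_circle_retract_of_punctured_plane: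
  assumes "open W" "\<psi> holomorphic_on W" and hom: "homeomorphism W (ball 0 1) \<psi> \<psi>i"
    and "0 < r" "r < 1"
  shows "\<psi>i ` sphere 0 r retract_of - {\<psi>i 0}"
proof -
  define z0 where "z0 = \<psi>i 0"
  have \<psi>i: "\<psi>i v \<in> W" "\<psi> (\<psi>i v) = v" if "v \<in> ball 0 1" for v
    using hom that by (auto simp: homeomorphism_def)
  have "simply_connected W"
    using homeomorphic_simply_connected_eq[of W "ball (0::complex) 1"] hom
      convex_imp_simply_connected[OF convex_ball] by (auto simp: homeomorphic_def)
  moreover have "inj_on \<psi> W"
    using hom by (metis homeomorphism_apply1 inj_on_inverseI)
  moreover have z0: "z0 \<in> W" "\<psi> z0 = 0"
    using \<psi>i[of 0] by (auto simp: z0_def)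
  ultimately obtain L where contL: "continuous_on W L"
    and L: "\<And>z. z \<in> W \<Longrightarrow> \<psi> z = (z - z0) * exp (L z)"
    using injective_holomorphic_exp_factor[OF assms(1) _ assms(2)] by (metis diff_zero)
  define A where "A = \<psi>i ` sphere 0 r"
  have "sphere 0 r \<subseteq> ball (0::complex) 1"
    using \<open>r < 1\<close> by auto
  then have AW: "A \<subseteq> W" and "compact A"
    using \<psi>i continuous_on_subset[OF homeomorphism_cont2[OF hom]]
    by (auto simp: A_def intro!: compact_continuous_image)
  then obtain \<theta> where cont\<theta>: "continuous_on UNIV \<theta>" and \<theta>: "\<And>z. z \<in> A \<Longrightarrow> \<theta> z = Im (L z)"
    using Tietze_unbounded[of A "\<lambda>z. Im (L z)" UNIV] continuous_on_subset[OF contL AW]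
    by (auto simp: compact_imp_closed intro: continuous_intros)
  \<comment> \<open>On A the argument of \<psi> z is that of z - z0 rotated by Im (L z); \<theta> extends this rotation.\<close>
  define \<rho> where "\<rho> z = \<psi>i (of_real r * sgn (z - z0) * exp (\<i> * of_real (\<theta> z)))" for z
  have arg: "of_real r * sgn (z - z0) * exp (\<i> * of_real (\<theta> z)) \<in> sphere 0 r" if "z \<noteq> z0" for z
    using that \<open>0 < r\<close> by (simp add: norm_mult norm_sgn)
  have "retraction (- {z0}) A \<rho>"
    unfolding retraction_def
  proof (intro conjI ballI)
    show "A \<subseteq> - {z0}"
      using \<psi>i z0 \<open>0 < r\<close> \<open>r < 1\<close> by (force simp: A_def)
    have "continuous_on (- {z0}) (\<lambda>z. of_real r * sgn (z - z0) * exp (\<i> * of_real (\<theta> z)))"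
      by (intro continuous_intros continuous_on_subset[OF cont\<theta>]) auto
    then show "continuous_on (- {z0}) \<rho>"
      unfolding \<rho>_def
      by (rule continuous_on_compose2[OF homeomorphism_cont2[OF hom]])
         (use arg \<open>r < 1\<close> in force)
    show "\<rho> \<in> - {z0} \<rightarrow> A"
      using arg by (auto simp: \<rho>_def A_def)
    fix z assume "z \<in> A"
    then obtain v where v: "cmod v = r" "z = \<psi>i v" by (auto simp: A_def)
    then have zW: "z \<in> W" and \<psi>z: "\<psi> z = v" and "z \<noteq> z0"
      using \<psi>i \<open>r < 1\<close> \<open>A \<subseteq> - {z0}\<close> \<open>z \<in> A\<close> by auto
    have "r = cmod (z - z0) * exp (Re (L z))"
      using L[OF zW] \<psi>z v(1) by (simp add: norm_mult)
    then have "of_real r * sgn (z - z0) * exp (\<i> * of_real (\<theta> z))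
          = (z - z0) * (of_real (exp (Re (L z))) * cis (Im (L z)))"
      using \<theta>[OF \<open>z \<in> A\<close>] \<open>z \<noteq> z0\<close> by (simp add: sgn_eq cis_conv_exp field_simps)
    also have "\<dots> = \<psi> z"
      using L[OF zW] by (simp add: exp_eq_polar)
    finally show "\<rho> z = z"
      using hom zW by (simp add: \<rho>_def homeomorphism_apply1)
  qed
  then show ?thesis
    unfolding retract_of_def A_def z0_def by blast
qed

lemma retraction_paste:
  assumes "closedin (top_of_set (C \<union> E)) C" "closedin (top_of_set (C \<union> E)) E"
    and \<rho>: "retraction E (C \<inter> E) \<rho>"
  shows "retraction (C \<union> E) C (\<lambda>z. if z \<in> C then z else \<rho> z)"
proof -
  have "continuous_on (C \<union> E) (\<lambda>z. if z \<in> C then z else \<rho> z)"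
  proof (rule continuous_on_cases_local[OF assms(1,2) continuous_on_id])
    show "continuous_on E \<rho>"
      using \<rho> by (simp add: retraction_def)
    show "z = \<rho> z" if "z \<in> C \<and> z \<notin> C \<or> z \<in> E \<and> z \<in> C" for z
      using \<rho> that by (simp add: retraction_def)
  qed
  moreover have "\<rho> z \<in> C" if "z \<in> E" for z
    using \<rho> that by (auto simp: retraction_def)
  ultimately show ?thesis
    by (auto simp: retraction_def)
qed

lemma conformal_subdisc_retraction:
  assumes "open W" "\<psi> holomorphic_on W" and hom: "homeomorphism W (ball 0 1) \<psi> \<psi>i"
    and "0 < r" "r < 1"
  obtains \<rho> where "retraction UNIV (\<psi>i ` cball 0 r) \<rho>"
    "\<And>z. z \<notin> \<psi>i ` ball 0 r \<Longrightarrow> \<rho> z \<in> \<psi>i ` sphere 0 r"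
proof -
  define C where "C = \<psi>i ` cball 0 r"
  define E where "E = - \<psi>i ` ball 0 r"
  have cball_sub: "cball 0 r \<subseteq> ball (0::complex) 1"
    using \<open>r < 1\<close> by auto
  have closedC: "closed C"
    unfolding C_def
    by (intro compact_imp_closed compact_continuous_image
        continuous_on_subset[OF homeomorphism_cont2[OF hom] cball_sub]) simp
  have closedE: "closed E"
  proof -
    have "openin (top_of_set (ball 0 1)) (ball (0::complex) r)"
      using cball_sub ball_subset_cball by (blast intro: open_subset)
    then have "openin (top_of_set W) (\<psi>i ` ball 0 r)"
      by (rule homeomorphism_imp_open_map[OF homeomorphism_symD[OF hom]])
    then show ?thesis
      unfolding E_def using \<open>open W\<close> by (simp add: closed_Compl openin_open_trans)
  qed
  have CE: "C \<inter> E = \<psi>i ` sphere 0 r"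
  proof -
    have "inj_on \<psi>i (ball 0 1)"
      using hom by (metis homeomorphism_apply2 inj_on_inverseI)
    then have "\<psi>i ` (cball 0 r - ball 0 r) = C - \<psi>i ` ball 0 r"
      unfolding C_def using cball_sub by (intro inj_on_image_set_diff) auto
    then show ?thesis
      unfolding cball_diff_eq_sphere by (simp add: E_def Diff_eq)
  qed
  obtain \<rho>0 where \<rho>0: "retraction (- {\<psi>i 0}) (\<psi>i ` sphere 0 r) \<rho>0"
    using conformal_circle_retract_of_punctured_plane[OF assms] by (auto simp: retract_of_def)
  have "E \<subseteq> - {\<psi>i 0}"
    using \<open>0 < r\<close> by (auto simp: E_def)
  moreover have "\<psi>i ` sphere 0 r \<subseteq> E"
    using CE by blast
  ultimately have \<rho>0E: "retraction E (C \<inter> E) \<rho>0"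
    unfolding CE using retraction_subset[OF \<rho>0] by blast
  moreover have "C \<union> E = UNIV"
    by (auto simp: C_def E_def)
  ultimately have "retraction UNIV C (\<lambda>z. if z \<in> C then z else \<rho>0 z)"
    using retraction_paste[of C E \<rho>0] closedC closedE by (simp add: closed_subset)
  moreover have "(if z \<in> C then z else \<rho>0 z) \<in> \<psi>i ` sphere 0 r" if "z \<notin> \<psi>i ` ball 0 r" for z
  proof -
    have "z \<in> E" using that by (simp add: E_def)
    moreover have "\<rho>0 z \<in> C \<inter> E" if "z \<in> E"
      using \<rho>0E that by (auto simp: retraction_def)
    ultimately show ?thesis
      using CE by auto
  qed
  ultimately show ?thesis
    using that unfolding C_def by blast
qed

lemma conformal_disc_retraction_avoiding:
  assumes "conformal_disc W" "compact (J \<inter> W)" "compact S" "S \<subseteq> W - J"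
  obtains \<rho> where "continuous_on UNIV \<rho>" "\<And>z. \<rho> z \<in> W" "\<And>z. z \<notin> J \<Longrightarrow> \<rho> z \<notin> J"
    "\<And>z. z \<in> S \<Longrightarrow> \<rho> z = z"
proof -
  obtain \<psi> \<psi>i where "open W" "\<psi> holomorphic_on W" and hom: "homeomorphism W (ball 0 1) \<psi> \<psi>i"
    using conformal_disc_homeomorphism[OF assms(1)] .
  have sub: "(J \<inter> W) \<union> S \<subseteq> W"
    using assms(4) by auto
  have "compact (\<psi> ` ((J \<inter> W) \<union> S))"
    by (rule compact_continuous_image[OF continuous_on_subset[OF homeomorphism_cont1[OF hom] sub]
          compact_Un[OF assms(2,3)]])
  moreover have "\<psi> ` ((J \<inter> W) \<union> S) \<subseteq> ball 0 1"
    using homeomorphism_image1[OF hom] sub by blast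
  \<comment> \<open>Retract onto a conformal subdisc containing J and S; its boundary curve misses J.\<close>
  ultimately obtain r where r: "0 < r" "r < 1" "\<psi> ` ((J \<inter> W) \<union> S) \<subseteq> ball 0 r"
    by (rule compact_subset_unit_ball_shrink)
  obtain \<rho> where \<rho>: "retraction UNIV (\<psi>i ` cball 0 r) \<rho>"
    and bd: "\<And>z. z \<notin> \<psi>i ` ball 0 r \<Longrightarrow> \<rho> z \<in> \<psi>i ` sphere 0 r"
    using conformal_subdisc_retraction[OF \<open>open W\<close> \<open>\<psi> holomorphic_on W\<close> hom r(1,2)]
    by blast
  have \<psi>i: "\<psi>i v \<in> W" "\<psi> (\<psi>i v) = v" if "v \<in> ball 0 1" for v
    using homeomorphism_image2[OF hom] homeomorphism_apply2[OF hom that] that by auto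
  have \<psi>: "\<psi>i (\<psi> z) = z" if "z \<in> W" for z
    using hom that by (simp add: homeomorphism_apply1)
  have cball_sub: "cball 0 r \<subseteq> ball (0::complex) 1"
    using r(2) by auto
  then have W: "\<psi>i ` cball 0 r \<subseteq> W"
    using \<psi>i by blast
  have J: "\<psi>i v \<notin> J" if "v \<in> sphere 0 r" for v
  proof
    assume "\<psi>i v \<in> J"
    moreover have "v \<in> ball 0 1" "\<psi>i v \<in> W"
      using that cball_sub \<psi>i by auto
    ultimately have "\<psi> (\<psi>i v) \<in> ball 0 r"
      using r(3) by blast
    then show False
      using that \<psi>i(2)[OF \<open>v \<in> ball 0 1\<close>] by simp
  qed
  have S: "S \<subseteq> \<psi>i ` ball 0 r"
  proof
    fix z assume "z \<in> S"
    then have "\<psi> z \<in> ball 0 r" "z = \<psi>i (\<psi> z)"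
      using r(3) \<psi> assms(4) by auto
    then show "z \<in> \<psi>i ` ball 0 r" by blast
  qed
  have fixed: "\<rho> z = z" if "z \<in> \<psi>i ` cball 0 r" for z
    using \<rho> that unfolding retraction_def by blast
  have into: "\<rho> z \<in> \<psi>i ` cball 0 r" for z
    using \<rho> unfolding retraction_def by blast
  have cont: "continuous_on UNIV \<rho>"
    using \<rho> unfolding retraction_def by blast
  have ball_sub: "\<psi>i ` ball 0 r \<subseteq> \<psi>i ` cball 0 r"
    by auto
  show ?thesis
  proof (rule that[OF cont])
    show "\<rho> z \<in> W" for z
      using into W by blast
    show "\<rho> z \<notin> J" if "z \<notin> J" for z
    proof (cases "z \<in> \<psi>i ` ball 0 r")
      case True
      then have "\<rho> z = z" using fixed ball_sub by blast
      then show ?thesis using that by simp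
    next
      case False
      then obtain v where "v \<in> sphere 0 r" "\<rho> z = \<psi>i v"
        using bd by blast
      then show ?thesis using J by simp
    qed
    show "\<rho> z = z" if "z \<in> S" for z
    proof (rule fixed)
      show "z \<in> \<psi>i ` cball 0 r" using S ball_sub that by (rule subsetD[OF order_trans])
    qed
  qed
qed

lemma connected_subset_disjoint_open_family:
  assumes "connected S" "S \<noteq> {}" "S \<subseteq> (\<Union>i<N. Ui i)" "\<forall>i<N. open (Ui i)"
    and "\<forall>i<N. \<forall>j<N. i \<noteq> j \<longrightarrow> Ui i \<inter> Ui j = {}"
  obtains k where "k < N" "S \<subseteq> Ui k"
proof -
  have "pairwise disjnt (Ui ` {..<N})"
    using assms(5) by (auto simp: pairwise_def disjnt_def)
  then obtain T where "T \<in> Ui ` {..<N}" "S \<subseteq> T"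
    by (rule connected_disjoint_Union_open_pick[of "Ui ` {..<N}" "{S}" S]) (use assms in auto)
  then show ?thesis using that by auto
qed

lemma disjoint_conformal_discs_retraction:
  assumes discs: "\<forall>i<N. conformal_disc (Ui i)"
    and disj: "\<forall>i<N. \<forall>j<N. i \<noteq> j \<longrightarrow> Ui i \<inter> Ui j = {}"
    and "compact J" "J \<subseteq> (\<Union>i<N. Ui i)"
    and "compact S" "connected S" "S \<noteq> {}" "S \<subseteq> (\<Union>i<N. Ui i) - J"
  obtains \<rho> where "continuous_on UNIV \<rho>" "\<And>z. z \<notin> J \<Longrightarrow> \<rho> z \<in> (\<Union>i<N. Ui i) - J"
    "\<And>z. z \<in> S \<Longrightarrow> \<rho> z = z"
proof -
  have opens: "\<forall>i<N. open (Ui i)"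
    using discs by (simp add: conformal_disc_def)
  obtain k where k: "k < N" "S \<subseteq> Ui k"
    using connected_subset_disjoint_open_family[OF assms(6,7) _ opens disj] assms(8) by blast
  have "J \<inter> Ui k = J - (\<Union>i\<in>{..<N} - {k}. Ui i)"
    using assms(4) disj k(1) by auto
  moreover have "open (\<Union>i\<in>{..<N} - {k}. Ui i)"
    using opens by auto
  ultimately have "compact (J \<inter> Ui k)"
    using assms(3) by (simp add: compact_diff)
  then obtain \<rho> where "continuous_on UNIV \<rho>" "\<And>z. \<rho> z \<in> Ui k" "\<And>z. z \<notin> J \<Longrightarrow> \<rho> z \<notin> J"
    "\<And>z. z \<in> S \<Longrightarrow> \<rho> z = z"
    using conformal_disc_retraction_avoiding[OF discs[rule_format, OF k(1)] _ assms(5)] k(2) assms(8)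
    by blast
  then show ?thesis
    using that k(1) by blast
qed

section \<open>Lifting inverse branches through the universal covering\<close>

lemma covering_space_lift_holomorphic_strong:
  assumes cov: "covering_space C p S" and "open C" "p holomorphic_on C"
    and "f holomorphic_on U" "f \<in> U \<rightarrow> S" "simply_connected U" "locally path_connected U"
    and "a \<in> U" "c \<in> C" "p c = f a"
  obtains g where "g holomorphic_on U" "g \<in> U \<rightarrow> C" "\<And>y. y \<in> U \<Longrightarrow> p (g y) = f y" "g a = c"
proof -
  obtain g where "continuous_on U g" "g \<in> U \<rightarrow> C" "g a = c" "\<And>y. y \<in> U \<Longrightarrow> p (g y) = f y"
    using covering_space_lift_strong[OF cov assms(9,8,6,7) holomorphic_on_imp_continuous_on[OF assms(4)]
        assms(5)] assms(10) by metis
  moreover have "g holomorphic_on U"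
    using covering_space_lift_is_holomorphic[OF cov assms(2,3,4,5)] calculation by metis
  ultimately show ?thesis using that by metis
qed

lemma covering_space_lifts_cover_fibre:
  fixes p :: "'a::real_normed_vector \<Rightarrow> 'b::real_normed_vector"
    and h :: "'c::real_normed_vector \<Rightarrow> 'b"
  assumes cov: "covering_space C p S" and "path_connected T"
    and h: "continuous_on T h" "h \<in> T \<rightarrow> S"
    and k: "\<And>j. j \<in> I \<Longrightarrow> continuous_on T (k j)" "\<And>j. j \<in> I \<Longrightarrow> k j \<in> T \<rightarrow> C"
      "\<And>j x. j \<in> I \<Longrightarrow> x \<in> T \<Longrightarrow> p (k j x) = h x"
    and a: "a \<in> T" "{c \<in> C. p c = h a} \<subseteq> (\<lambda>j. k j a) ` I" and z: "z \<in> T"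
  shows "{c \<in> C. p c = h z} \<subseteq> (\<lambda>j. k j z) ` I"
proof
  fix c assume c: "c \<in> {c \<in> C. p c = h z}"
  obtain \<gamma> where \<gamma>: "path \<gamma>" "path_image \<gamma> \<subseteq> T" "pathstart \<gamma> = z" "pathfinish \<gamma> = a"
    using \<open>path_connected T\<close> z a(1) by (meson path_connected_def)
  have cont_h\<gamma>: "continuous_on {0..1} (h \<circ> \<gamma>)"
    using \<gamma>(1,2) continuous_on_subset[OF h(1)] path_continuous_image path_def by blast
  have img_h\<gamma>: "path_image (h \<circ> \<gamma>) \<subseteq> S"
    using \<gamma>(2) h(2) by (auto simp: path_image_compose)
  obtain q where q: "path q" "path_image q \<subseteq> C" "pathstart q = c"
    and pq: "\<And>t. t \<in> {0..1} \<Longrightarrow> p (q t) = (h \<circ> \<gamma>) t"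
    using covering_space_lift_path_strong[OF cov _ _ img_h\<gamma>, of c] c cont_h\<gamma> \<gamma>(3)
    by (auto simp: path_def pathstart_compose)
  have "q 1 \<in> {c \<in> C. p c = h a}"
    using q(2) pq[of 1] \<gamma>(4) by (auto simp: path_image_def pathfinish_def)
  then obtain j where j: "j \<in> I" "q 1 = k j a"
    using a(2) by blast
  have "q 0 = (k j \<circ> \<gamma>) 0"
  proof (rule covering_space_lift_unique[OF cov _ cont_h\<gamma> _ _ _ _ _ _ _ connected_Icc, of q 1])
    show "q 1 = (k j \<circ> \<gamma>) 1" using j \<gamma>(4) by (simp add: pathfinish_def)
    show "continuous_on {0..1} (k j \<circ> \<gamma>)"
      using \<gamma>(1,2) continuous_on_subset[OF k(1)[OF j(1)]] path_continuous_image path_def by blast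
    show "k j \<circ> \<gamma> \<in> {0..1} \<rightarrow> C"
      using \<gamma>(2) k(2)[OF j(1)] by (force simp: path_image_def)
    show "h \<circ> \<gamma> \<in> {0..1} \<rightarrow> S" "q \<in> {0..1} \<rightarrow> C"
      using img_h\<gamma> q(2) by (auto simp: path_image_def)
    show "\<And>x. x \<in> {0..1} \<Longrightarrow> (h \<circ> \<gamma>) x = p ((k j \<circ> \<gamma>) x)"
      using \<gamma>(2) k(3)[OF j(1)] by (force simp: path_image_def)
  qed (use q(1) pq in \<open>auto simp: path_def\<close>)
  then show "c \<in> (\<lambda>j. k j z) ` I"
    using j(1) q(3) \<gamma>(3) by (force simp: pathstart_def)
qed

lemma homotopic_paths_retraction:
  assumes hom: "homotopic_paths X p q" and \<rho>: "continuous_on X \<rho>" "\<rho> \<in> X \<rightarrow> Y"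
    and fixed: "\<And>z. z \<in> path_image p \<union> path_image q \<Longrightarrow> \<rho> z = z"
  shows "homotopic_paths Y p q"
proof -
  have paths: "path p" "path q" and "path_image p \<subseteq> X" "path_image q \<subseteq> X"
    using homotopic_paths_imp_path[OF hom] homotopic_paths_imp_subset[OF hom] by auto
  then have "path_image p \<subseteq> Y" "path_image q \<subseteq> Y"
    using \<rho>(2) fixed by (metis Pi_iff Un_iff subset_iff)+
  then have "homotopic_paths Y p (\<rho> \<circ> p)" "homotopic_paths Y q (\<rho> \<circ> q)"
    using paths fixed by (auto intro!: homotopic_paths_eq simp: path_image_def)
  moreover have "homotopic_paths Y (\<rho> \<circ> p) (\<rho> \<circ> q)"
    by (rule homotopic_paths_continuous_image[OF hom \<rho>])
  ultimately show ?thesis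
    by (meson homotopic_paths_sym homotopic_paths_trans)
qed

lemma covering_space_null_homotopic_lift_closed:
  fixes p :: "'a::real_normed_vector \<Rightarrow> 'b::real_normed_vector"
  assumes cov: "covering_space C p S" and "path \<gamma>" "path_image \<gamma> \<subseteq> C"
    and hom: "homotopic_paths S (p \<circ> \<gamma>) (linepath (p (pathstart \<gamma>)) (p (pathstart \<gamma>)))"
  shows "pathfinish \<gamma> = pathstart \<gamma>"
proof -
  have "pathstart \<gamma> \<in> C"
    using assms(3) pathstart_in_path_image by blast
  have "pathfinish \<gamma> = pathfinish (linepath (pathstart \<gamma>) (pathstart \<gamma>))"
    by (rule covering_space_monodromy[OF cov _ _ _ _ hom assms(2,3)])
       (use homotopic_paths_imp_path[OF hom] homotopic_paths_imp_subset[OF hom]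
          \<open>pathstart \<gamma> \<in> C\<close> in \<open>auto simp: linepath_refl path_def pathstart_def\<close>)
  then show ?thesis by simp
qed

lemma covering_image_of_loop_null_homotopic:
  fixes \<phi> :: "'a::real_normed_vector \<Rightarrow> 'b::real_normed_vector"
  assumes cov: "covering_space D \<phi> X" and "simply_connected D"
    and \<sigma>: "path \<sigma>" "path_image \<sigma> \<subseteq> D" "pathfinish \<sigma> = pathstart \<sigma>"
    and \<rho>: "continuous_on X \<rho>" "\<rho> \<in> X \<rightarrow> Y" "\<And>z. z \<in> path_image (\<phi> \<circ> \<sigma>) \<Longrightarrow> \<rho> z = z"
  shows "homotopic_paths Y (\<phi> \<circ> \<sigma>) (linepath (\<phi> (pathstart \<sigma>)) (\<phi> (pathstart \<sigma>)))"
proof -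
  define c where "c = pathstart \<sigma>"
  have "c \<in> D"
    using \<sigma>(2) pathstart_in_path_image by (auto simp: c_def)
  then have "homotopic_paths D \<sigma> (linepath c c)"
    using \<sigma> \<open>simply_connected D\<close> by (auto simp: simply_connected_eq_homotopic_paths c_def)
  then have "homotopic_paths X (\<phi> \<circ> \<sigma>) (\<phi> \<circ> linepath c c)"
    using homotopic_paths_continuous_image covering_space_imp_continuous[OF cov]
      covering_space_imp_surjective[OF cov] by blast
  moreover have "\<phi> \<circ> linepath c c = linepath (\<phi> c) (\<phi> c)"
    by (simp add: linepath_refl o_def)
  moreover have "\<phi> c \<in> path_image (\<phi> \<circ> \<sigma>)"
    by (metis c_def path_image_compose pathstart_in_path_image image_eqI)
  ultimately show ?thesis
    using \<rho> by (auto simp: c_def intro: homotopic_paths_retraction)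
qed

lemma inj_on_lift_of_inverse_branch:
  fixes \<phi> :: "'a::real_normed_vector \<Rightarrow> 'b::real_normed_vector" and f :: "'b \<Rightarrow> 'b"
  assumes cov: "covering_space D \<phi> X" and "simply_connected D"
    and f: "continuous_on Y f" "f \<in> Y \<rightarrow> X"
    and g: "continuous_on D g" "g \<in> D \<rightarrow> D" "\<And>z. z \<in> D \<Longrightarrow> \<phi> (g z) \<in> Y"
      "\<And>z. z \<in> D \<Longrightarrow> f (\<phi> (g z)) = \<phi> z"
    and retract: "\<And>K. compact K \<Longrightarrow> connected K \<Longrightarrow> K \<noteq> {} \<Longrightarrow> K \<subseteq> Y \<Longrightarrow>
        \<exists>\<rho>. continuous_on X \<rho> \<and> \<rho> \<in> X \<rightarrow> Y \<and> (\<forall>z\<in>K. \<rho> z = z)"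
  shows "inj_on g D"
proof
  fix a b assume a: "a \<in> D" and b: "b \<in> D" and gab: "g a = g b"
  obtain \<gamma> where \<gamma>: "path \<gamma>" "path_image \<gamma> \<subseteq> D" "pathstart \<gamma> = a" "pathfinish \<gamma> = b"
    using \<open>simply_connected D\<close> a b by (meson simply_connected_eq_homotopic_paths path_connected_def)
  have cont\<phi>: "continuous_on D \<phi>"
    by (rule covering_space_imp_continuous[OF cov])
  define \<sigma> where "\<sigma> = g \<circ> \<gamma>"
  have \<sigma>: "path \<sigma>" "path_image \<sigma> \<subseteq> D" "pathfinish \<sigma> = pathstart \<sigma>"
    using \<gamma> g(1,2) gab unfolding \<sigma>_def
    by (auto simp: path_image_compose pathstart_compose pathfinish_compose
        intro!: path_continuous_image elim: continuous_on_subset)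
  have "path (\<phi> \<circ> \<sigma>)" "path_image (\<phi> \<circ> \<sigma>) \<subseteq> Y"
    using \<sigma> cont\<phi> g(3) \<gamma>(2)
    by (auto simp: \<sigma>_def path_image_compose intro!: path_continuous_image elim: continuous_on_subset)
  then obtain \<rho> where \<rho>: "continuous_on X \<rho>" "\<rho> \<in> X \<rightarrow> Y" "\<forall>z\<in>path_image (\<phi> \<circ> \<sigma>). \<rho> z = z"
    using retract compact_path_image connected_path_image path_image_nonempty by metis
  have "homotopic_paths X (f \<circ> (\<phi> \<circ> \<sigma>)) (f \<circ> linepath (\<phi> (pathstart \<sigma>)) (\<phi> (pathstart \<sigma>)))"
    by (rule homotopic_paths_continuous_image
        [OF covering_image_of_loop_null_homotopic[OF cov \<open>simply_connected D\<close> \<sigma> \<rho>(1,2)] f])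
       (use \<rho>(3) in blast)
  moreover have "f \<circ> linepath (\<phi> (pathstart \<sigma>)) (\<phi> (pathstart \<sigma>)) = linepath (\<phi> a) (\<phi> a)"
  proof -
    have "pathstart \<sigma> = g a"
      using \<gamma>(3) by (simp add: \<sigma>_def pathstart_compose)
    then show ?thesis
      using g(4)[OF a] by (simp add: linepath_refl o_def)
  qed
  moreover have "homotopic_paths X (\<phi> \<circ> \<gamma>) (f \<circ> (\<phi> \<circ> \<sigma>))"
  proof (rule homotopic_paths_eq)
    show "path (\<phi> \<circ> \<gamma>)"
      using \<gamma>(1,2) cont\<phi> by (auto intro: path_continuous_image elim: continuous_on_subset)
    show "path_image (\<phi> \<circ> \<gamma>) \<subseteq> X"
      using \<gamma>(2) covering_space_imp_surjective[OF cov] by (auto simp: path_image_compose)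
    show "(\<phi> \<circ> \<gamma>) t = (f \<circ> (\<phi> \<circ> \<sigma>)) t" if "t \<in> {0..1}" for t
    proof -
      have "\<gamma> t \<in> D" using \<gamma>(2) that by (auto simp: path_image_def)
      then show ?thesis using g(4) by (simp add: \<sigma>_def)
    qed
  qed
  \<comment> \<open>So \<phi> \<circ> \<gamma> is null-homotopic, and its lift \<gamma> must be a closed path.\<close>
  ultimately have "homotopic_paths X (\<phi> \<circ> \<gamma>) (linepath (\<phi> (pathstart \<gamma>)) (\<phi> (pathstart \<gamma>)))"
    using \<gamma>(3) homotopic_paths_trans by metis
  then have "pathfinish \<gamma> = pathstart \<gamma>"
    by (rule covering_space_null_homotopic_lift_closed[OF cov \<gamma>(1,2)])
  then show "a = b"
    using \<gamma>(3,4) by simp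
qed

lemma holomorphic_inverse_branch_lift:
  fixes f \<phi> :: "complex \<Rightarrow> complex"
  assumes covf: "covering_space Y f X" "open Y" "f holomorphic_on Y" "Y \<subseteq> X"
    and cov\<phi>: "covering_space D \<phi> X" "open D" "\<phi> holomorphic_on D" "simply_connected D"
    and "a \<in> D" "y \<in> Y" "f y = \<phi> a"
  obtains g where "g holomorphic_on D" "g \<in> D \<rightarrow> D" "\<And>z. z \<in> D \<Longrightarrow> \<phi> (g z) \<in> Y"
    "\<And>z. z \<in> D \<Longrightarrow> f (\<phi> (g z)) = \<phi> z" "\<phi> (g a) = y"
proof -
  have lpc: "locally path_connected D"
    using \<open>open D\<close> by (rule open_imp_locally_path_connected)
  have \<phi>X: "\<phi> \<in> D \<rightarrow> X"
    using covering_space_imp_surjective[OF cov\<phi>(1)] by blast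
  obtain h where h: "h holomorphic_on D" "h \<in> D \<rightarrow> Y" "\<And>z. z \<in> D \<Longrightarrow> f (h z) = \<phi> z" "h a = y"
    using covering_space_lift_holomorphic_strong[OF covf(1,2,3) cov\<phi>(3) \<phi>X cov\<phi>(4) lpc assms(9-11)]
    by blast
  obtain a' where "a' \<in> D" "\<phi> a' = y"
    using covering_space_imp_surjective[OF cov\<phi>(1)] \<open>y \<in> Y\<close> \<open>Y \<subseteq> X\<close> by (metis imageE subsetD)
  moreover have "h \<in> D \<rightarrow> X"
    using h(2) \<open>Y \<subseteq> X\<close> by blast
  ultimately obtain g where "g holomorphic_on D" "g \<in> D \<rightarrow> D" "\<And>z. z \<in> D \<Longrightarrow> \<phi> (g z) = h z" "g a = a'"
    using covering_space_lift_holomorphic_strong[OF cov\<phi>(1,2,3) h(1) _ cov\<phi>(4) lpc \<open>a \<in> D\<close>] h(4)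
    by metis
  then show ?thesis
    using that h \<open>\<phi> a' = y\<close> by (metis Pi_iff)
qed

lemma covering_inverse_branches:
  fixes f \<phi> :: "complex \<Rightarrow> complex"
  assumes covf: "covering_space Y f X" "open Y" "f holomorphic_on Y" "Y \<subseteq> X"
    and cov\<phi>: "covering_space D \<phi> X" "open D" "\<phi> holomorphic_on D" "simply_connected D"
    and retract: "\<And>K. compact K \<Longrightarrow> connected K \<Longrightarrow> K \<noteq> {} \<Longrightarrow> K \<subseteq> Y \<Longrightarrow>
        \<exists>\<rho>. continuous_on X \<rho> \<and> \<rho> \<in> X \<rightarrow> Y \<and> (\<forall>z\<in>K. \<rho> z = z)"
    and "a \<in> D" and ws: "inj_on ws {..<d}" "ws ` {..<d} = {y \<in> Y. f y = \<phi> a}"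
  obtains g where
    "\<And>i. i < d \<Longrightarrow> g i holomorphic_on D \<and> inj_on (g i) D \<and> g i ` D \<subseteq> D \<and> \<phi> (g i a) = ws i"
    "\<And>i z. i < d \<Longrightarrow> z \<in> D \<Longrightarrow> \<phi> (g i z) \<in> Y \<and> f (\<phi> (g i z)) = \<phi> z"
    "\<And>z j j'. z \<in> D \<Longrightarrow> j < d \<Longrightarrow> j' < d \<Longrightarrow> j \<noteq> j' \<Longrightarrow> \<phi> (g j z) \<noteq> \<phi> (g j' z)"
    "\<And>z. z \<in> D \<Longrightarrow> (\<lambda>j. \<phi> (g j z)) ` {..<d} = {y \<in> Y. f y = \<phi> z}"
proof -
  have "\<exists>h. h holomorphic_on D \<and> h \<in> D \<rightarrow> D \<and> (\<forall>z\<in>D. \<phi> (h z) \<in> Y \<and> f (\<phi> (h z)) = \<phi> z)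
      \<and> \<phi> (h a) = ws i" if "i < d" for i
  proof -
    have "ws i \<in> Y" "f (ws i) = \<phi> a"
      using ws(2) that by auto
    then show ?thesis
      using holomorphic_inverse_branch_lift[OF covf cov\<phi> \<open>a \<in> D\<close>] by metis
  qed
  then obtain g where g: "\<And>i. i < d \<Longrightarrow> g i holomorphic_on D \<and> g i \<in> D \<rightarrow> D
      \<and> (\<forall>z\<in>D. \<phi> (g i z) \<in> Y \<and> f (\<phi> (g i z)) = \<phi> z) \<and> \<phi> (g i a) = ws i"
    by metis
  have cont\<phi>: "continuous_on D \<phi>" and \<phi>X: "\<phi> \<in> D \<rightarrow> X"
    using covering_space_imp_continuous[OF cov\<phi>(1)] covering_space_imp_surjective[OF cov\<phi>(1)] by auto
  have contf: "continuous_on Y f" and fX: "f \<in> Y \<rightarrow> X"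
    using covering_space_imp_continuous[OF covf(1)] covering_space_imp_surjective[OF covf(1)] by auto
  have contg: "continuous_on D (g i)" if "i < d" for i
    using g[OF that] holomorphic_on_imp_continuous_on by blast
  have cont\<phi>g: "continuous_on D (\<lambda>z. \<phi> (g i z))" if "i < d" for i
    using g[OF that] by (intro continuous_on_compose2[OF cont\<phi> contg[OF that]]) auto
  have inj: "inj_on (g i) D" if "i < d" for i
    using g[OF that]
    by (intro inj_on_lift_of_inverse_branch[OF cov\<phi>(1,4) contf fX contg[OF that] _ _ _ retract]) auto
  have "connected D"
    using cov\<phi>(4) simply_connected_imp_connected by blast
  have distinct: "\<phi> (g j z) \<noteq> \<phi> (g j' z)" if "z \<in> D" "j < d" "j' < d" "j \<noteq> j'" for z j j'
  proof
    assume "\<phi> (g j z) = \<phi> (g j' z)"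
    then have "\<phi> (g j a) = \<phi> (g j' a)"
      using g[OF that(2)] g[OF that(3)]
      by (intro covering_space_lift_unique[OF covf(1) _ cont\<phi> \<phi>X cont\<phi>g[OF that(2)] _ _
            cont\<phi>g[OF that(3)] _ _ \<open>connected D\<close> that(1) \<open>a \<in> D\<close>]) auto
    then show False
      using g[OF that(2)] g[OF that(3)] ws(1) that(2-4) by (auto dest: inj_onD)
  qed
  have fibre: "(\<lambda>j. \<phi> (g j z)) ` {..<d} = {y \<in> Y. f y = \<phi> z}" if "z \<in> D" for z
  proof
    show "(\<lambda>j. \<phi> (g j z)) ` {..<d} \<subseteq> {y \<in> Y. f y = \<phi> z}"
      using g that by auto
    have "{y \<in> Y. f y = \<phi> a} \<subseteq> (\<lambda>j. \<phi> (g j a)) ` {..<d}"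
      using ws(2) g by auto
    then show "{y \<in> Y. f y = \<phi> z} \<subseteq> (\<lambda>j. \<phi> (g j z)) ` {..<d}"
      using g cov\<phi>(4) simply_connected_imp_path_connected
      by (intro covering_space_lifts_cover_fibre[OF covf(1) _ cont\<phi> \<phi>X cont\<phi>g _ _ \<open>a \<in> D\<close> _ that])
         auto
  qed
  show ?thesis
    by (rule that) (use g inj distinct fibre in \<open>auto simp: Pi_iff\<close>)
qed

lemma Union_inverse_branches_eq:
  assumes "\<phi> ` D = X" "f ` Y \<subseteq> X"
    and fibres: "\<And>z. z \<in> D \<Longrightarrow> (\<lambda>j. \<phi> (g j z)) ` I = {y \<in> Y. f y = \<phi> z}"
  shows "Y = (\<Union>i\<in>I. \<phi> ` g i ` D)"
proof
  show "Y \<subseteq> (\<Union>i\<in>I. \<phi> ` g i ` D)"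
  proof
    fix y assume "y \<in> Y"
    then obtain z where z: "z \<in> D" "\<phi> z = f y"
      using assms(1,2) by (metis image_subset_iff imageE)
    then have "y \<in> (\<lambda>j. \<phi> (g j z)) ` I"
      using fibres[OF z(1)] \<open>y \<in> Y\<close> by auto
    then show "y \<in> (\<Union>i\<in>I. \<phi> ` g i ` D)"
      using z(1) by blast
  qed
  show "(\<Union>i\<in>I. \<phi> ` g i ` D) \<subseteq> Y"
    using fibres by blast
qed

theorem mainTheorem2:
  fixes U :: "complex set" and Ui :: "nat \<Rightarrow> complex set" and N :: nat
    and f :: "complex \<Rightarrow> complex" and d :: nat
    and w :: complex and ws :: "nat \<Rightarrow> complex" and \<phi> :: "complex \<Rightarrow> complex"
  defines "U' \<equiv> (\<Union>i<N. Ui i)"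
  assumes U_disc: "conformal_disc U"
    and Ui_disc: "\<forall>i<N. conformal_disc (Ui i)"
    and Ui_disj: "\<forall>i<N. \<forall>j<N. i \<noteq> j \<longrightarrow> Ui i \<inter> Ui j = {}"
    and relcpt: "compact (closure U') \<and> closure U' \<subseteq> U"
    and f_holo: "f holomorphic_on U'"
    and f_maps: "f ` U' \<subseteq> U"
    and f_proper: "proper_map (top_of_set U') (top_of_set U) f"
    and f_deg: "\<exists>ds::nat \<Rightarrow> nat. (\<forall>i<N. holo_degree f (Ui i) U (ds i)) \<and> d = (\<Sum>i<N. ds i)"
    and d_gt: "d > 1"
    and KJ: "filled_julia f U' = julia f U'"
    and cantor: "cantor_set (julia f U')"
    and crit: "\<forall>z\<in>U'. deriv f z = 0 \<longrightarrow> z \<in> filled_julia f U'"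
    and w_in: "w \<in> U - U'"
    and ws_inj: "inj_on ws {..<d}"
    and ws_pre: "ws ` {..<d} = {z \<in> U'. f z = w}"
    and phi_holo: "\<phi> holomorphic_on ball 0 1"
    and phi_cov: "covering_space (ball 0 1) \<phi> (U - julia f U')"
    and phi0: "\<phi> 0 = w"
  shows "\<exists>g :: nat \<Rightarrow> complex \<Rightarrow> complex.
     (\<forall>i<d. g i holomorphic_on ball 0 1 \<and> inj_on (g i) (ball 0 1)
        \<and> g i ` ball 0 1 \<subseteq> ball 0 1
        \<and> (\<forall>z\<in>ball 0 1. \<phi> (g i z) \<in> U' \<and> f (\<phi> (g i z)) = \<phi> z)
        \<and> \<phi> (g i 0) = ws i)
   \<and> (\<forall>z\<in>ball 0 1. \<forall>j<d. \<forall>j'<d. j \<noteq> j' \<longrightarrow> \<phi> (g j z) \<noteq> \<phi> (g j' z))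
   \<and> (\<forall>z\<in>ball 0 1. (\<lambda>j. \<phi> (g j z)) ` {..<d} = {y \<in> U'. f y = \<phi> z})
   \<and> {z \<in> U'. f z \<in> U - julia f U'} = U' - julia f U'
   \<and> U' - julia f U' = (\<Union>i<d. \<phi> ` (g i ` ball 0 1))"
proof -
  define J where "J = julia f U'"
  have K: "filled_julia f U' = J" and "frontier J = J"
    using KJ by (simp_all add: J_def julia_def)
  have "compact J" "J \<noteq> {}"
    using cantor by (auto simp: cantor_set_def J_def)
  have "open U" "connected U" "open U'"
    using U_disc Ui_disc by (auto simp: conformal_disc_def U'_def)
  have "U' \<subseteq> U"
    using relcpt closure_subset by blast
  have "J \<subseteq> U'"
    using K by (auto simp: filled_julia_def)
  have covf: "covering_space (U' - J) f (U - J)"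
    using covering_space_complement_filled_julia[OF \<open>open U\<close> \<open>connected U\<close> \<open>open U'\<close> f_holo f_proper]
      K \<open>frontier J = J\<close> \<open>compact J\<close> \<open>J \<noteq> {}\<close> crit by auto
  have retract: "\<exists>\<rho>. continuous_on (U - J) \<rho> \<and> \<rho> \<in> U - J \<rightarrow> U' - J \<and> (\<forall>z\<in>S. \<rho> z = z)"
    if "compact S" "connected S" "S \<noteq> {}" "S \<subseteq> U' - J" for S
    using disjoint_conformal_discs_retraction[OF Ui_disc Ui_disj \<open>compact J\<close>
        \<open>J \<subseteq> U'\<close>[unfolded U'_def] that[unfolded U'_def]]
    by (metis Diff_iff Pi_I U'_def continuous_on_subset subset_UNIV)
  obtain g where g: "\<And>i. i < d \<Longrightarrow> g i holomorphic_on ball 0 1 \<and> inj_on (g i) (ball 0 1)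
        \<and> g i ` ball 0 1 \<subseteq> ball 0 1 \<and> \<phi> (g i 0) = ws i"
      "\<And>i z. i < d \<Longrightarrow> z \<in> ball 0 1 \<Longrightarrow> \<phi> (g i z) \<in> U' - J \<and> f (\<phi> (g i z)) = \<phi> z"
      "\<And>z j j'. z \<in> ball 0 1 \<Longrightarrow> j < d \<Longrightarrow> j' < d \<Longrightarrow> j \<noteq> j' \<Longrightarrow> \<phi> (g j z) \<noteq> \<phi> (g j' z)"
      "\<And>z. z \<in> ball 0 1 \<Longrightarrow> (\<lambda>j. \<phi> (g j z)) ` {..<d} = {y \<in> U' - J. f y = \<phi> z}"
  proof (rule covering_inverse_branches[OF covf _ f_holo[THEN holomorphic_on_subset] _
        phi_cov[folded J_def] _ phi_holo _ retract _ ws_inj])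
    show "ws ` {..<d} = {y \<in> U' - J. f y = \<phi> 0}"
      using ws_pre phi0 w_in \<open>J \<subseteq> U'\<close> filled_julia_complement_fibre[of w f U'] K by auto
  qed (use \<open>open U'\<close> \<open>U' \<subseteq> U\<close> \<open>compact J\<close> in \<open>auto simp: convex_imp_simply_connected
        compact_imp_closed intro!: open_Diff\<close>)
  have \<phi>_onto: "\<phi> ` ball 0 1 = U - J"
    using covering_space_imp_surjective[OF phi_cov] by (simp add: J_def)
  have preimage: "{z \<in> U'. f z \<in> U - J} = U' - J"
    using filled_julia_complement_preimage[OF f_maps] K by simp
  show ?thesis
    unfolding J_def[symmetric]
  proof (intro exI[of _ g] conjI)
    show "\<forall>z\<in>ball 0 1. (\<lambda>j. \<phi> (g j z)) ` {..<d} = {y \<in> U'. f y = \<phi> z}"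
      using g(4) \<phi>_onto filled_julia_complement_fibre[of _ f U'] K by blast
    show "U' - J = (\<Union>i<d. \<phi> ` g i ` ball 0 1)"
      using Union_inverse_branches_eq[OF \<phi>_onto _ g(4)] preimage by blast
  qed (use g(1-3) preimage in auto)
qed

end
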